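(* Let $l,u$ be integers with $0<l\le u<K$ and $\Pi=\Pi_{l,u}$. Let $\chi^\circ$ be any of the three procedures $\hat\chi,\tilde\chi,\check\chi$ (with some fixed thresholds) and suppose that $\mathrm{FWE}^i_A(\chi^\circ)\le1/2$ for $i\in\{1,2\}$ and all $A\in\Pi_{l,u}$. Then, for $i\in\{1,2\}$ and every $A\in\Pi_{l,u}$, $$\mathrm{pFDR}^i_A(\chi^\circ)\le 2\,\mathrm{FWE}^i_A(\chi^\circ),$$ and $$\mathrm{pFDR}^i_A(\chi)\ge\frac1K\,\mathrm{FWE}^i_A(\chi)\quad\text{for every procedure }\chi.$$
   Context: Let $K\ge2$, $[K]=\{1,\dots,K\}$, $\mathbb N=\{1,2,\dots\}$. There are $K$ independent data streams $X_k=\{X_k(n):n\in\mathbb N\}$; $\mathcal F_k(n)=\sigma(X_k(t):t\le n)$, $\mathcal F(n)=\sigma(\mathcal F_k(n):k\in[K])$. For each $k$, $\mathrm P_k^0,\mathrm P_k^1$ are distributions of $X_k$ mutually absolutely continuous on each $\mathcal F_k(n)$, $\lambda_k(n)=\log\frac{d\mathrm P_k^1}{d\mathrm P_k^0}(\mathcal F_k(n))$. For $A\subseteq[K]$, $\mathrm P_A$ is the joint law with independent streams, $X_k\sim\mathrm P_k^1$ if $k\in A$, $\mathrm P_k^0$ otherwise; $\mathrm E_A$ its expectation. $\Pi_{l,u}=\{A\subseteq[K]:l\le|A|\le u\}$. $\lambda_{(1)}(n)\ge\dots\ge\lambda_{(K)}(n)$ are the ordered LLRs, $p(n)=|\{k:\lambda_k(n)>0\}|$.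 A procedure $\chi=(\mathbf T,\mathbf D)$: $\mathbb N$-valued stopping times $T_k$ w.r.t. $\{\mathcal F(n)\}$ and $\mathcal F(T_k)$-measurable Bernoulli $D_k$; $\mathbf D=\{k:D_k=1\}$. $\mathrm{FWE}^1_A(\chi)=\mathrm P_A(\mathbf D\setminus A\ne\emptyset)$, $\mathrm{FWE}^2_A(\chi)=\mathrm P_A(A\setminus\mathbf D\ne\emptyset)$. Positive false discovery / non-discovery rates: $\mathrm{pFDR}^1_A(\chi)=\mathrm E_A\big[\frac{|\mathbf D\setminus A|}{|\mathbf D|}\,\big|\,|\mathbf D|\ge1\big]$, $\mathrm{pFDR}^2_A(\chi)=\mathrm E_A\big[\frac{|A\setminus\mathbf D|}{K-|\mathbf D|}\,\big|\,K-|\mathbf D|\ge1\big]$. The three procedures (thresholds $a,b,c,d>0$): parallel SPRT $\tilde\chi$: $\tilde T_k=\inf\{n:\lambda_k(n)\notin(-b,a)\}$, $\tilde D_k=\mathbf 1\{\lambda_k(\tilde T_k)\ge a\}$. Proposed $\hat\chi$: $\hat T_k=\hat T_{k,1}\wedge\hat T_{k,2}$, $\hat D_k=1$ iff $\hat T_k=\hat T_{k,1}$, where if $l=u\equiv m$, $\hat T_{k,1}=\inf\{n:\lambda_k(n)\ge\lambda_{(m+1)}(n)+c\}$, $\hat T_{k,2}=\inf\{n:\lambda_k(n)\le\lambda_{(m)}(n)-d\}$, and if $l<u$, $\hat T_{k,1}=\inf\{n:\lambda_k(n)\ge\min\{a,\lambda_{(l+1)}(n)+c\}\}$, $\hat T_{k,2}=\inf\{n:\lambda_k(n)\le\max\{-b,\lambda_{(u)}(n)-d\}\}$.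 Synchronous $\check\chi$: common time $\check T$; if $l=u\equiv m$, $\check T=\inf\{n:\lambda_{(m)}(n)-\lambda_{(m+1)}(n)\ge c\vee d\}$ with the $m$ largest-LLR streams declared signals; if $l<u$, $\check T=\tau_1\wedge\tau_2\wedge\tau_3$, $\tau_1=\inf\{n:\lambda_{(l+1)}(n)\le\min\{-b,-c+\lambda_{(l)}(n)\}\}$, $\tau_2=\inf\{n:\lambda_k(n)\notin(-b,a)\ \forall k,\ l\le p(n)\le u\}$, $\tau_3=\inf\{n:\lambda_{(u)}(n)\ge\max\{a,d+\lambda_{(u+1)}(n)\}\}$, with the $(p(\check T)\vee l)\wedge u$ largest-LLR streams declared signals. *)

theory Defs
  imports "HOL-Probability.Probability"
begin

text \<open>A stream path is a function
  nat => 'a; the observation at time t (t = 1,2,...) is the coordinate t (coordinate 0 is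
  never observed). The joint outcome is a function from the stream index set [K] = {1..K}
  to stream paths.\<close>

definition path_space :: "'a measure \<Rightarrow> (nat \<Rightarrow> 'a) measure" where
  "path_space M = PiM UNIV (\<lambda>_. M)"

definition trunc :: "nat \<Rightarrow> (nat \<Rightarrow> 'a) \<Rightarrow> (nat \<Rightarrow> 'a)" where
  "trunc n x = restrict x {1..n}"

definition trunc_space :: "'a measure \<Rightarrow> nat \<Rightarrow> (nat \<Rightarrow> 'a) measure" where
  "trunc_space M n = PiM {1..n} (\<lambda>_. M)"

definition trunc_law :: "'a measure \<Rightarrow> nat \<Rightarrow> (nat \<Rightarrow> 'a) measure \<Rightarrow> (nat \<Rightarrow> 'a) measure" where
  "trunc_law M n Q = distr Q (trunc_space M n) (trunc n)"

definition stream_model ::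
  "'a measure \<Rightarrow> nat \<Rightarrow> (nat \<Rightarrow> (nat \<Rightarrow> 'a) measure) \<Rightarrow> (nat \<Rightarrow> (nat \<Rightarrow> 'a) measure) \<Rightarrow> bool" where
  "stream_model M K P0 P1 \<longleftrightarrow>
     (\<forall>k\<in>{1..K}. prob_space (P0 k) \<and> prob_space (P1 k) \<and>
        sets (P0 k) = sets (path_space M) \<and> sets (P1 k) = sets (path_space M) \<and>
        (\<forall>n\<ge>1. absolutely_continuous (trunc_law M n (P0 k)) (trunc_law M n (P1 k)) \<and>
                absolutely_continuous (trunc_law M n (P1 k)) (trunc_law M n (P0 k))))"

text \<open>Log-likelihood ratio lambda_k(n) = log dP1/dP0 on F_k(n), evaluated at a path.\<close>
definition llr ::
  "'a measure \<Rightarrow> (nat \<Rightarrow> (nat \<Rightarrow> 'a) measure) \<Rightarrow> (nat \<Rightarrow> (nat \<Rightarrow> 'a) measure)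
     \<Rightarrow> nat \<Rightarrow> nat \<Rightarrow> (nat \<Rightarrow> 'a) \<Rightarrow> real" where
  "llr M P0 P1 k n x =
     ln (enn2real (RN_deriv (trunc_law M n (P0 k)) (trunc_law M n (P1 k)) (trunc n x)))"

type_synonym 'a outcome = "nat \<Rightarrow> nat \<Rightarrow> 'a"

definition joint_space :: "'a measure \<Rightarrow> nat \<Rightarrow> 'a outcome measure" where
  "joint_space M K = PiM {1..K} (\<lambda>_. path_space M)"

definition PA ::
  "nat \<Rightarrow> (nat \<Rightarrow> (nat \<Rightarrow> 'a) measure) \<Rightarrow> (nat \<Rightarrow> (nat \<Rightarrow> 'a) measure) \<Rightarrow> nat set
     \<Rightarrow> 'a outcome measure" where
  "PA K P0 P1 A = PiM {1..K} (\<lambda>k. if k \<in> A then P1 k else P0 k)"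

definition filt :: "'a measure \<Rightarrow> nat \<Rightarrow> nat \<Rightarrow> 'a outcome measure" where
  "filt M K n = vimage_algebra (space (joint_space M K))
      (\<lambda>\<omega>. restrict (\<lambda>k. trunc n (\<omega> k)) {1..K})
      (PiM {1..K} (\<lambda>_. trunc_space M n))"

definition Lam ::
  "'a measure \<Rightarrow> (nat \<Rightarrow> (nat \<Rightarrow> 'a) measure) \<Rightarrow> (nat \<Rightarrow> (nat \<Rightarrow> 'a) measure)
     \<Rightarrow> nat \<Rightarrow> nat \<Rightarrow> 'a outcome \<Rightarrow> real" where
  "Lam M P0 P1 k n \<omega> = llr M P0 P1 k n (\<omega> k)"

definition ostat :: "nat \<Rightarrow> (nat \<Rightarrow> real) \<Rightarrow> nat \<Rightarrow> real" where
  "ostat K f j = rev (sort (map f [1..<K+1])) ! (j - 1)"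

definition npos :: "nat \<Rightarrow> (nat \<Rightarrow> real) \<Rightarrow> nat" where
  "npos K f = card {k\<in>{1..K}. f k > 0}"

definition top :: "nat \<Rightarrow> (nat \<Rightarrow> real) \<Rightarrow> nat \<Rightarrow> nat set" where
  "top K f j = {k\<in>{1..K}. f k \<ge> ostat K f j}"

definition hit :: "(nat \<Rightarrow> bool) \<Rightarrow> enat" where
  "hit P = (if \<exists>n\<ge>1. P n then enat (LEAST n. n \<ge> 1 \<and> P n) else \<infinity>)"

definition Pi_lu :: "nat \<Rightarrow> nat \<Rightarrow> nat \<Rightarrow> nat set set" where
  "Pi_lu K l u = {A. A \<subseteq> {1..K} \<and> l \<le> card A \<and> card A \<le> u}"

definition is_procedure ::
  "'a measure \<Rightarrow> nat \<Rightarrow> (nat \<Rightarrow> 'a outcome \<Rightarrow> nat) \<Rightarrow> (nat \<Rightarrow> 'a outcome \<Rightarrow> bool) \<Rightarrow> bool" where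
  "is_procedure M K T D \<longleftrightarrow>
     (\<forall>k\<in>{1..K}. (\<forall>\<omega>\<in>space (joint_space M K). T k \<omega> \<ge> 1) \<and>
        stopping_time (filt M K) (T k) \<and>
        Measurable.pred (filtration.pre_sigma (space (joint_space M K)) (filt M K) (T k)) (D k))"

definition Dset :: "nat \<Rightarrow> (nat \<Rightarrow> 'a outcome \<Rightarrow> bool) \<Rightarrow> 'a outcome \<Rightarrow> nat set" where
  "Dset K D \<omega> = {k\<in>{1..K}. D k \<omega>}"

definition sprt_T :: "'a measure \<Rightarrow> _ \<Rightarrow> _ \<Rightarrow> real \<Rightarrow> real \<Rightarrow> nat \<Rightarrow> 'a outcome \<Rightarrow> enat" where
  "sprt_T M P0 P1 a b k \<omega> = hit (\<lambda>n. Lam M P0 P1 k n \<omega> \<notin> {-b<..<a})"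

definition sprt_D :: "'a measure \<Rightarrow> _ \<Rightarrow> _ \<Rightarrow> real \<Rightarrow> real \<Rightarrow> nat \<Rightarrow> 'a outcome \<Rightarrow> bool" where
  "sprt_D M P0 P1 a b k \<omega> =
     (case sprt_T M P0 P1 a b k \<omega> of enat n \<Rightarrow> Lam M P0 P1 k n \<omega> \<ge> a | \<infinity> \<Rightarrow> False)"

definition hat_T1 :: "'a measure \<Rightarrow> _ \<Rightarrow> _ \<Rightarrow> nat \<Rightarrow> nat \<Rightarrow> nat \<Rightarrow> real \<Rightarrow> real \<Rightarrow> real \<Rightarrow> real
     \<Rightarrow> nat \<Rightarrow> 'a outcome \<Rightarrow> enat" where
  "hat_T1 M P0 P1 K l u a b c d k \<omega> =
     (if l = u then hit (\<lambda>n. Lam M P0 P1 k n \<omega> \<ge> ostat K (\<lambda>j. Lam M P0 P1 j n \<omega>) (l + 1) + c)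
      else hit (\<lambda>n. Lam M P0 P1 k n \<omega> \<ge> min a (ostat K (\<lambda>j. Lam M P0 P1 j n \<omega>) (l + 1) + c)))"

definition hat_T2 :: "'a measure \<Rightarrow> _ \<Rightarrow> _ \<Rightarrow> nat \<Rightarrow> nat \<Rightarrow> nat \<Rightarrow> real \<Rightarrow> real \<Rightarrow> real \<Rightarrow> real
     \<Rightarrow> nat \<Rightarrow> 'a outcome \<Rightarrow> enat" where
  "hat_T2 M P0 P1 K l u a b c d k \<omega> =
     (if l = u then hit (\<lambda>n. Lam M P0 P1 k n \<omega> \<le> ostat K (\<lambda>j. Lam M P0 P1 j n \<omega>) u - d)
      else hit (\<lambda>n. Lam M P0 P1 k n \<omega> \<le> max (-b) (ostat K (\<lambda>j. Lam M P0 P1 j n \<omega>) u - d)))"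

definition hat_D :: "'a measure \<Rightarrow> _ \<Rightarrow> _ \<Rightarrow> nat \<Rightarrow> nat \<Rightarrow> nat \<Rightarrow> real \<Rightarrow> real \<Rightarrow> real \<Rightarrow> real
     \<Rightarrow> nat \<Rightarrow> 'a outcome \<Rightarrow> bool" where
  "hat_D M P0 P1 K l u a b c d k \<omega> =
     (min (hat_T1 M P0 P1 K l u a b c d k \<omega>) (hat_T2 M P0 P1 K l u a b c d k \<omega>)
        = hat_T1 M P0 P1 K l u a b c d k \<omega>)"

definition check_T :: "'a measure \<Rightarrow> _ \<Rightarrow> _ \<Rightarrow> nat \<Rightarrow> nat \<Rightarrow> nat \<Rightarrow> real \<Rightarrow> real \<Rightarrow> real \<Rightarrow> real
     \<Rightarrow> 'a outcome \<Rightarrow> enat" where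
  "check_T M P0 P1 K l u a b c d \<omega> =
     (let L = (\<lambda>n j. Lam M P0 P1 j n \<omega>) in
      if l = u then hit (\<lambda>n. ostat K (L n) l - ostat K (L n) (l + 1) \<ge> max c d)
      else min (hit (\<lambda>n. ostat K (L n) (l + 1) \<le> min (-b) (-c + ostat K (L n) l)))
           (min (hit (\<lambda>n. (\<forall>k\<in>{1..K}. L n k \<notin> {-b<..<a}) \<and> l \<le> npos K (L n) \<and> npos K (L n) \<le> u))
                (hit (\<lambda>n. ostat K (L n) u \<ge> max a (d + ostat K (L n) (u + 1))))))"

definition check_D :: "'a measure \<Rightarrow> _ \<Rightarrow> _ \<Rightarrow> nat \<Rightarrow> nat \<Rightarrow> nat \<Rightarrow> real \<Rightarrow> real \<Rightarrow> real \<Rightarrow> real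
     \<Rightarrow> nat \<Rightarrow> 'a outcome \<Rightarrow> bool" where
  "check_D M P0 P1 K l u a b c d k \<omega> =
     (case check_T M P0 P1 K l u a b c d \<omega> of
        enat n \<Rightarrow> (let L = (\<lambda>j. Lam M P0 P1 j n \<omega>) in
                   if l = u then k \<in> top K L l
                   else k \<in> top K L (min (max (npos K L) l) u))
      | \<infinity> \<Rightarrow> False)"

definition FWE1 :: "'a outcome measure \<Rightarrow> nat set \<Rightarrow> ('a outcome \<Rightarrow> nat set) \<Rightarrow> real" where
  "FWE1 P A Ds = measure P {\<omega>\<in>space P. Ds \<omega> - A \<noteq> {}}"

definition FWE2 :: "'a outcome measure \<Rightarrow> nat set \<Rightarrow> ('a outcome \<Rightarrow> nat set) \<Rightarrow> real" where
  "FWE2 P A Ds = measure P {\<omega>\<in>space P. A - Ds \<omega> \<noteq> {}}"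

text \<open>Conditional expectation E[X | B] written as E[X 1_B] / P(B) (0 if P(B) = 0).\<close>
definition pFDR1 :: "'a outcome measure \<Rightarrow> nat set \<Rightarrow> ('a outcome \<Rightarrow> nat set) \<Rightarrow> real" where
  "pFDR1 P A Ds =
     (\<integral>\<omega>. (if card (Ds \<omega>) \<ge> 1 then real (card (Ds \<omega> - A)) / real (card (Ds \<omega>)) else 0) \<partial>P)
     / measure P {\<omega>\<in>space P. card (Ds \<omega>) \<ge> 1}"

definition pFDR2 :: "nat \<Rightarrow> 'a outcome measure \<Rightarrow> nat set \<Rightarrow> ('a outcome \<Rightarrow> nat set) \<Rightarrow> real" where
  "pFDR2 K P A Ds =
     (\<integral>\<omega>. (if real K - real (card (Ds \<omega>)) \<ge> 1
           then real (card (A - Ds \<omega>)) / (real K - real (card (Ds \<omega>))) else 0) \<partial>P)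
     / measure P {\<omega>\<in>space P. real K - real (card (Ds \<omega>)) \<ge> 1}"

end

theory Submission
  imports Defs
begin

(* The upper bounds need no property of the procedures beyond measurability. Conditionally on at
   least one discovery, the false discovery proportion is at most the indicator of a family-wise
   error of the first kind, so pFDR1 <= FWE1 / P(|D| >= 1); and if nothing is discovered while
   A is nonempty, a family-wise error of the second kind occurs, so P(|D| >= 1) >= 1 - FWE2 >= 1/2.
   For the lower bounds, a nonzero false discovery proportion is at least 1/K. Replacing D and A by
   their complements in [K] exchanges the two kinds of error, which reduces pFDR2 to pFDR1. *)

section \<open>Order statistics\<close>

lemma sorted_nth_le_iff:
  fixes xs :: "'a::linorder list"
  assumes "sorted xs" "m < length xs"
  shows "xs ! m \<le> t \<longleftrightarrow> m < length (filter (\<lambda>x. x \<le> t) xs)"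
  using assms
proof (induction xs arbitrary: m)
  case Nil
  then show ?case by simp
next
  case (Cons x xs)
  show ?case
  proof (cases "x \<le> t")
    case True
    with Cons show ?thesis by (cases m) auto
  next
    case False
    with Cons.prems(1) have "\<forall>y\<in>set xs. \<not> y \<le> t" by auto
    with False Cons.prems show ?thesis by (cases m) (auto simp: filter_empty_conv)
  qed
qed

lemma ostat_le_iff:
  assumes "1 \<le> j" "j \<le> K"
  shows "ostat K f j \<le> t \<longleftrightarrow> K - j < card {i\<in>{1..K}. f i \<le> t}"
proof -
  let ?xs = "map f [1..<K+1]"
  have "ostat K f j = sort ?xs ! (K - j)"
    unfolding ostat_def using assms by (simp add: rev_nth Suc_diff_le)
  then have "ostat K f j \<le> t \<longleftrightarrow> K - j < length (filter (\<lambda>x. x \<le> t) ?xs)"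
    using sorted_nth_le_iff[of "sort ?xs" "K - j" t] assms by (simp add: filter_sort)
  also have "length (filter (\<lambda>x. x \<le> t) ?xs) = card {i\<in>{1..K}. f i \<le> t}"
    by (simp add: filter_map distinct_card[symmetric] comp_def) (rule arg_cong[where f = card], auto)
  finally show ?thesis .
qed

section \<open>Measurability of the procedures\<close>

(* The library states this comparison only as a set in sets M, a form the measurable method does
   not apply to two non-constant sides. *)
lemma pred_le_borel[measurable]:
  fixes f g :: "'b \<Rightarrow> real"
  assumes [measurable]: "f \<in> borel_measurable N" "g \<in> borel_measurable N"
  shows "Measurable.pred N (\<lambda>\<omega>. f \<omega> \<le> g \<omega>)"
  unfolding pred_def by measurable

lemma measurable_count_space_binop:
  fixes f :: "'b \<Rightarrow> 'c::countable" and g :: "'b \<Rightarrow> 'd::countable"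
  assumes "f \<in> N \<rightarrow>\<^sub>M count_space UNIV" "g \<in> N \<rightarrow>\<^sub>M count_space UNIV"
  shows "(\<lambda>\<omega>. h (f \<omega>) (g \<omega>)) \<in> N \<rightarrow>\<^sub>M count_space UNIV"
  by (rule measurable_compose_countable[OF measurable_compose[OF assms(2) measurable_count_space] assms(1)])

lemma measurable_hit[measurable]:
  assumes [measurable]: "\<And>n. Measurable.pred N (P n)"
  shows "(\<lambda>\<omega>. hit (\<lambda>n. P n \<omega>)) \<in> N \<rightarrow>\<^sub>M count_space UNIV"
  unfolding hit_def by measurable

lemma borel_measurable_ostat[measurable]:
  assumes [measurable]: "\<And>j. (\<lambda>\<omega>. f j \<omega>) \<in> borel_measurable N"
  shows "(\<lambda>\<omega>. ostat K (\<lambda>j. f j \<omega>) i) \<in> borel_measurable N"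
proof -
  define j where "j = max 1 i"
  have ostat_j: "ostat K g i = ostat K g j" for g
    by (simp add: j_def ostat_def max_def)
  show ?thesis
  proof (cases "K < j")
    case True
    \<comment> \<open>an index beyond the list: \<open>ostat\<close> is the same unspecified value for every \<open>g\<close>\<close>
    have "ostat K g j = [] ! (j - 1 - K)" for g
    proof -
      let ?ys = "rev (sort (map g [1..<K+1]))"
      have "length ?ys + (j - 1 - K) = j - 1" using True by (simp del: upt_Suc)
      then show ?thesis
        unfolding ostat_def by (metis append_Nil2 nth_append_length_plus)
    qed
    then show ?thesis by (simp add: ostat_j)
  next
    case False
    then have j: "1 \<le> j" "j \<le> K" by (auto simp: j_def)
    show ?thesis
    proof (rule borel_measurableI_le)
      fix t
      have "{\<omega> \<in> space N. ostat K (\<lambda>j. f j \<omega>) i \<le> t} =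
            {\<omega> \<in> space N. K - j < card {k\<in>{1..K}. f k \<omega> \<le> t}}"
        by (simp only: ostat_j ostat_le_iff[OF j])
      also have "\<dots> \<in> sets N" by measurable
      finally show "{\<omega> \<in> space N. ostat K (\<lambda>j. f j \<omega>) i \<le> t} \<in> sets N" .
    qed
  qed
qed

lemma measurable_npos[measurable]:
  assumes [measurable]: "\<And>j. (\<lambda>\<omega>. f j \<omega>) \<in> borel_measurable N"
  shows "(\<lambda>\<omega>. npos K (\<lambda>j. f j \<omega>)) \<in> N \<rightarrow>\<^sub>M count_space UNIV"
  unfolding npos_def by measurable

lemma pred_in_top[measurable]:
  assumes [measurable]: "\<And>j. (\<lambda>\<omega>. f j \<omega>) \<in> borel_measurable N" "i \<in> N \<rightarrow>\<^sub>M count_space UNIV"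
  shows "Measurable.pred N (\<lambda>\<omega>. k \<in> top K (\<lambda>j. f j \<omega>) (i \<omega>))"
proof -
  have "Measurable.pred N (\<lambda>\<omega>. k \<in> top K (\<lambda>j. f j \<omega>) m)" for m
    unfolding top_def by measurable
  then show ?thesis by (rule measurable_compose_countable) fact
qed

lemma measurable_trunc[measurable]: "trunc n \<in> path_space M \<rightarrow>\<^sub>M trunc_space M n"
  unfolding trunc_def[abs_def] path_space_def trunc_space_def
  by (rule measurable_restrict_subset) simp

lemma borel_measurable_Lam[measurable]: "Lam M P0 P1 k n \<in> borel_measurable (joint_space M K)"
proof (cases "k \<in> {1..K}")
  case True
  have [measurable]:
    "RN_deriv (trunc_law M n (P0 k)) (trunc_law M n (P1 k)) \<in> borel_measurable (trunc_space M n)"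
    unfolding trunc_law_def by (simp cong: measurable_cong_sets)
  show ?thesis
    unfolding Lam_def[abs_def] llr_def joint_space_def using True by measurable
next
  case False
  \<comment> \<open>outcomes are extensional, so the stream \<open>k\<close> of an outcome is \<open>undefined\<close>\<close>
  then have "\<omega> k = undefined" if "\<omega> \<in> space (joint_space M K)" for \<omega>
    using that by (auto simp: joint_space_def space_PiM PiE_def extensional_def)
  then show ?thesis
    by (subst measurable_cong[where g = "\<lambda>_. Lam M P0 P1 k n (\<lambda>_. undefined)"]) (auto simp: Lam_def)
qed

lemma pred_sprt_D: "Measurable.pred (joint_space M K) (sprt_D M P0 P1 a b k)"
  unfolding sprt_D_def[abs_def] sprt_T_def by measurable

lemma measurable_hat_T1: "hat_T1 M P0 P1 K l u a b c d k \<in> joint_space M K \<rightarrow>\<^sub>M count_space UNIV"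
  by (cases "l = u"; simp add: hat_T1_def[abs_def]; measurable)

lemma measurable_hat_T2: "hat_T2 M P0 P1 K l u a b c d k \<in> joint_space M K \<rightarrow>\<^sub>M count_space UNIV"
  by (cases "l = u"; simp add: hat_T2_def[abs_def]; measurable)

lemma pred_hat_D: "Measurable.pred (joint_space M K) (hat_D M P0 P1 K l u a b c d k)"
  unfolding hat_D_def[abs_def]
  by (rule measurable_count_space_binop) (rule measurable_hat_T1 measurable_hat_T2)+

lemma measurable_check_T[measurable]:
  "check_T M P0 P1 K l u a b c d \<in> joint_space M K \<rightarrow>\<^sub>M count_space UNIV"
  by (cases "l = u"; simp add: check_T_def[abs_def] Let_def; measurable)

lemma pred_check_D: "Measurable.pred (joint_space M K) (check_D M P0 P1 K l u a b c d k)"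
  by (cases "l = u"; simp add: check_D_def[abs_def] Let_def cong: enat.case_cong; measurable)

lemma measurable_trunc_joint:
  "(\<lambda>\<omega>. \<lambda>k\<in>{1..K}. trunc n (\<omega> k)) \<in> joint_space M K \<rightarrow>\<^sub>M (\<Pi>\<^sub>M k\<in>{1..K}. trunc_space M n)"
  unfolding joint_space_def by measurable

lemma sets_filt_subset: "sets (filt M K n) \<subseteq> sets (joint_space M K)"
  using measurable_trunc_joint unfolding filt_def measurable_iff_sets by blast

lemma sets_filt_mono:
  assumes "i \<le> j"
  shows "sets (filt M K i) \<subseteq> sets (filt M K j)"
proof -
  let ?trunc = "\<lambda>n \<omega>. \<lambda>k\<in>{1..K}. trunc n (\<omega> k)"
  let ?N = "\<lambda>n. \<Pi>\<^sub>M k\<in>{1..K}. trunc_space M n"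
  have "?trunc j \<in> filt M K j \<rightarrow>\<^sub>M ?N j"
    unfolding filt_def using measurable_space[OF measurable_trunc_joint]
    by (intro measurable_vimage_algebra1) blast
  moreover have "(\<lambda>x. \<lambda>k\<in>{1..K}. restrict (x k) {1..i}) \<in> ?N j \<rightarrow>\<^sub>M ?N i"
  proof -
    have [measurable]: "(\<lambda>x. restrict x {1..i}) \<in> trunc_space M j \<rightarrow>\<^sub>M trunc_space M i"
      unfolding trunc_space_def using assms by (intro measurable_restrict_subset) auto
    show ?thesis by measurable
  qed
  ultimately have "(\<lambda>\<omega>. \<lambda>k\<in>{1..K}. restrict (?trunc j \<omega> k) {1..i}) \<in> filt M K j \<rightarrow>\<^sub>M ?N i"
    by (rule measurable_comp[unfolded comp_def])
  moreover have "(\<lambda>k\<in>{1..K}. restrict (?trunc j \<omega> k) {1..i}) = ?trunc i \<omega>" for \<omega> :: "'a outcome"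
    using assms by (auto simp: trunc_def fun_eq_iff)
  ultimately have "?trunc i \<in> filt M K j \<rightarrow>\<^sub>M ?N i"
    by simp
  then show ?thesis
    unfolding measurable_iff_sets by (simp add: filt_def)
qed

lemma filtration_filt: "filtration (space (joint_space M K)) (filt M K)"
proof
  show "space (filt M K n) = space (joint_space M K)" for n
    by (simp add: filt_def)
qed (rule sets_filt_mono)

lemma pred_decision_of_procedure:
  assumes "is_procedure M K T D" "k \<in> {1..K}"
  shows "Measurable.pred (joint_space M K) (D k)"
proof -
  interpret filtration "space (joint_space M K)" "filt M K" by (rule filtration_filt)
  have T: "stopping_time (filt M K) (T k)" and D: "Measurable.pred (pre_sigma (T k)) (D k)"
    using assms unfolding is_procedure_def by auto
  have "sets (pre_sigma (T k)) \<subseteq> sets (joint_space M K)"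
  proof
    fix A assume "A \<in> sets (pre_sigma (T k))"
    then have "{\<omega>\<in>A. T k \<omega> \<le> t} \<in> sets (joint_space M K)" for t
      using sets_pre_sigmaD[OF T] sets_filt_subset by blast
    then have "(\<Union>t. {\<omega>\<in>A. T k \<omega> \<le> t}) \<in> sets (joint_space M K)" by blast
    moreover have "(\<Union>t. {\<omega>\<in>A. T k \<omega> \<le> t}) = A" by auto
    ultimately show "A \<in> sets (joint_space M K)" by simp
  qed
  with D show ?thesis unfolding pred_def space_pre_sigma by blast
qed

lemma sets_PA:
  assumes "stream_model M K P0 P1"
  shows "sets (PA K P0 P1 A) = sets (joint_space M K)"
  unfolding PA_def joint_space_def
  by (rule sets_PiM_cong) (use assms in \<open>auto simp: stream_model_def\<close>)

lemma prob_space_PA: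
  assumes "stream_model M K P0 P1"
  shows "prob_space (PA K P0 P1 A)"
  unfolding PA_def by (rule prob_space_PiM) (use assms in \<open>auto simp: stream_model_def\<close>)

lemma measurable_Dset:
  assumes "\<And>k. k \<in> {1..K} \<Longrightarrow> Measurable.pred N (D k)"
  shows "Dset K D \<in> N \<rightarrow>\<^sub>M count_space (Pow {1..K})"
proof (rule measurable_count_space_eq2[THEN iffD2])
  show "finite (Pow {1..K})" by simp
  show "Dset K D \<in> space N \<rightarrow> Pow {1..K} \<and> (\<forall>S\<in>Pow {1..K}. Dset K D -` {S} \<inter> space N \<in> sets N)"
  proof (intro conjI ballI)
    show "Dset K D \<in> space N \<rightarrow> Pow {1..K}" by (auto simp: Dset_def)
    fix S assume "S \<in> Pow {1..K}"
    then have "Dset K D -` {S} \<inter> space N = {\<omega>\<in>space N. \<forall>k\<in>{1..K}. D k \<omega> \<longleftrightarrow> k \<in> S}"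
      unfolding Dset_def by blast
    also have "\<dots> \<in> sets N"
      unfolding pred_def[symmetric]
    proof (rule pred_intros_finite(3))
      fix k assume "k \<in> {1..K}"
      show "Measurable.pred N (\<lambda>\<omega>. D k \<omega> \<longleftrightarrow> k \<in> S)"
        by (rule pred_intros_logic(6)[OF assms[OF \<open>k \<in> {1..K}\<close>] measurable_const]) simp
    qed simp
    finally show "Dset K D -` {S} \<inter> space N \<in> sets N" .
  qed
qed

lemma measurable_Dset_PA:
  assumes "stream_model M K P0 P1" "\<And>k. k \<in> {1..K} \<Longrightarrow> Measurable.pred (joint_space M K) (D k)"
  shows "Dset K D \<in> PA K P0 P1 A \<rightarrow>\<^sub>M count_space (Pow {1..K})"
proof (rule measurable_Dset)
  fix k assume "k \<in> {1..K}"
  then show "Measurable.pred (PA K P0 P1 A) (D k)"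
    using assms(2) measurable_cong_sets[OF sets_PA[OF assms(1)] refl] by blast
qed

section \<open>Error rates\<close>

lemma (in prob_space) expectation_div_prob_le:
  assumes [measurable]: "f \<in> borel_measurable M" "E \<in> events" "Q \<in> events" "F \<in> events"
    and f: "\<And>\<omega>. \<omega> \<in> space M \<Longrightarrow> 0 \<le> f \<omega> \<and> f \<omega> \<le> indicator E \<omega>"
    and "space M - Q \<subseteq> F" "prob F \<le> 1/2"
  shows "expectation f / prob Q \<le> 2 * prob E"
proof -
  have "integrable M f"
  proof (rule integrable_const_bound[where B = 1])
    show "AE \<omega> in M. norm (f \<omega>) \<le> 1"
      using f by (intro AE_I2) (smt (verit) indicator_le_1 real_norm_def)
  qed fact
  then have "expectation f \<le> expectation (indicator E)"
    using f by (intro integral_mono) (auto simp: emeasure_eq_measure)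
  then have "expectation f \<le> prob E" by simp
  moreover have "0 \<le> expectation f" using f by (intro integral_nonneg_AE AE_I2) auto
  moreover have "1/2 \<le> prob Q"
    using finite_measure_mono[OF \<open>space M - Q \<subseteq> F\<close>] prob_compl[of Q] \<open>prob F \<le> 1/2\<close> by simp
  ultimately have "expectation f / prob Q \<le> expectation f / (1/2)"
    by (intro divide_left_mono) auto
  also have "\<dots> \<le> 2 * prob E" using \<open>expectation f \<le> prob E\<close> by simp
  finally show ?thesis .
qed

lemma (in prob_space) expectation_div_prob_ge:
  assumes [measurable]: "f \<in> borel_measurable M" "E \<in> events" "Q \<in> events"
    and "E \<subseteq> Q" "0 < c"
    and f: "\<And>\<omega>. \<omega> \<in> space M \<Longrightarrow> indicator E \<omega> / c \<le> f \<omega> \<and> f \<omega> \<le> 1"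
  shows "prob E / c \<le> expectation f / prob Q"
proof (cases "prob Q = 0")
  case True
  then have "prob E = 0"
    using finite_measure_mono[OF \<open>E \<subseteq> Q\<close> \<open>Q \<in> events\<close>] by (metis measure_nonneg order_antisym)
  with True show ?thesis by simp
next
  case False
  have f_nonneg: "0 \<le> f \<omega>" if "\<omega> \<in> space M" for \<omega>
    using f[OF that] \<open>0 < c\<close> by (smt (verit) divide_nonneg_pos indicator_pos_le)
  have "integrable M f"
    by (rule integrable_const_bound[where B = 1]) (use f f_nonneg in auto)
  then have "expectation (\<lambda>\<omega>. indicator E \<omega> / c) \<le> expectation f"
    using f by (intro integral_mono) (auto simp: emeasure_eq_measure)
  then have "prob E / c \<le> expectation f" by simp
  also have "\<dots> \<le> expectation f / prob Q"
  proof -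
    have "0 < prob Q" using False by (simp add: zero_less_measure_iff)
    moreover have "0 \<le> expectation f" using f_nonneg by (intro integral_nonneg_AE AE_I2) auto
    ultimately show ?thesis by (simp add: le_divide_eq mult_left_le)
  qed
  finally show ?thesis .
qed

lemma
  assumes Ds: "Ds \<in> P \<rightarrow>\<^sub>M count_space X"
  shows borel_measurable_count_space_comp: "(\<lambda>\<omega>. h (Ds \<omega>)) \<in> borel_measurable P"
    and sets_Collect_count_space_comp: "{\<omega>\<in>space P. R (Ds \<omega>)} \<in> sets P"
  using measurable_compose[OF Ds borel_measurable_count_space]
    measurable_compose[OF Ds measurable_count_space, of R]
  by (simp_all add: pred_def)

definition fdp :: "nat set \<Rightarrow> nat set \<Rightarrow> real" where
  "fdp A Ds = (if card Ds \<ge> 1 then real (card (Ds - A)) / real (card Ds) else 0)"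

lemma pFDR1_eq_fdp:
  "pFDR1 P A Ds = (\<integral>\<omega>. fdp A (Ds \<omega>) \<partial>P) / measure P {\<omega>\<in>space P. card (Ds \<omega>) \<ge> 1}"
  by (simp add: pFDR1_def fdp_def)

lemma fdp_nonneg: "0 \<le> fdp A Ds"
  by (simp add: fdp_def)

lemma fdp_bounds:
  assumes "finite I" "Ds \<subseteq> I"
  shows "of_bool (Ds - A \<noteq> {}) / real (card I) \<le> fdp A Ds \<and> fdp A Ds \<le> of_bool (Ds - A \<noteq> {})"
proof (cases "Ds - A = {}")
  case True
  then show ?thesis by (simp add: fdp_def True)
next
  case False
  have "finite Ds" using assms finite_subset by blast
  with False have "1 \<le> card (Ds - A)" by (simp add: Suc_le_eq card_gt_0_iff)
  moreover have "card (Ds - A) \<le> card Ds" "card Ds \<le> card I"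
    using assms \<open>finite Ds\<close> by (auto intro: card_mono)
  ultimately show ?thesis
    using False by (simp add: fdp_def frac_le)
qed

lemma pFDR1_le_twice_FWE1:
  assumes "prob_space P" and Ds: "Ds \<in> P \<rightarrow>\<^sub>M count_space (Pow I)"
    and "finite I" "A \<noteq> {}" "FWE2 P A Ds \<le> 1/2"
  shows "pFDR1 P A Ds \<le> 2 * FWE1 P A Ds"
proof -
  interpret prob_space P by fact
  have Ds_sub: "Ds \<omega> \<subseteq> I" if "\<omega> \<in> space P" for \<omega>
    using measurable_space[OF Ds that] by simp
  then have Ds_finite: "finite (Ds \<omega>)" if "\<omega> \<in> space P" for \<omega>
    using \<open>finite I\<close> that finite_subset by blast
  have "(\<integral>\<omega>. fdp A (Ds \<omega>) \<partial>P) / prob {\<omega>\<in>space P. card (Ds \<omega>) \<ge> 1}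
      \<le> 2 * prob {\<omega>\<in>space P. Ds \<omega> - A \<noteq> {}}"
  proof (rule expectation_div_prob_le)
    show "space P - {\<omega>\<in>space P. card (Ds \<omega>) \<ge> 1} \<subseteq> {\<omega>\<in>space P. A - Ds \<omega> \<noteq> {}}"
      using \<open>A \<noteq> {}\<close> Ds_finite by (auto simp: Suc_le_eq card_gt_0_iff)
    show "prob {\<omega>\<in>space P. A - Ds \<omega> \<noteq> {}} \<le> 1/2"
      using \<open>FWE2 P A Ds \<le> 1/2\<close> by (simp add: FWE2_def)
    show "0 \<le> fdp A (Ds \<omega>) \<and> fdp A (Ds \<omega>) \<le> indicator {\<omega>\<in>space P. Ds \<omega> - A \<noteq> {}} \<omega>"
      if "\<omega> \<in> space P" for \<omega>
      using fdp_nonneg fdp_bounds[OF \<open>finite I\<close> Ds_sub[OF that], of A] that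
      by (auto simp: indicator_def)
  qed (auto intro: borel_measurable_count_space_comp[OF Ds] sets_Collect_count_space_comp[OF Ds])
  then show ?thesis by (simp add: pFDR1_eq_fdp FWE1_def)
qed

lemma FWE1_div_card_le_pFDR1:
  assumes "prob_space P" and Ds: "Ds \<in> P \<rightarrow>\<^sub>M count_space (Pow I)"
    and "finite I" "I \<noteq> {}"
  shows "FWE1 P A Ds / real (card I) \<le> pFDR1 P A Ds"
proof -
  interpret prob_space P by fact
  have Ds_sub: "Ds \<omega> \<subseteq> I" if "\<omega> \<in> space P" for \<omega>
    using measurable_space[OF Ds that] by simp
  then have Ds_finite: "finite (Ds \<omega>)" if "\<omega> \<in> space P" for \<omega>
    using \<open>finite I\<close> that finite_subset by blast
  have "prob {\<omega>\<in>space P. Ds \<omega> - A \<noteq> {}} / real (card I)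
      \<le> (\<integral>\<omega>. fdp A (Ds \<omega>) \<partial>P) / prob {\<omega>\<in>space P. card (Ds \<omega>) \<ge> 1}"
  proof (rule expectation_div_prob_ge)
    show "{\<omega>\<in>space P. Ds \<omega> - A \<noteq> {}} \<subseteq> {\<omega>\<in>space P. card (Ds \<omega>) \<ge> 1}"
      using Ds_finite by (auto simp: Suc_le_eq card_gt_0_iff)
    show "0 < real (card I)" using \<open>finite I\<close> \<open>I \<noteq> {}\<close> by (simp add: card_gt_0_iff)
    show "indicator {\<omega>\<in>space P. Ds \<omega> - A \<noteq> {}} \<omega> / real (card I) \<le> fdp A (Ds \<omega>)
        \<and> fdp A (Ds \<omega>) \<le> 1" if "\<omega> \<in> space P" for \<omega>
      using fdp_bounds[OF \<open>finite I\<close> Ds_sub[OF that], of A] that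
      by (cases "Ds \<omega> \<subseteq> A") (auto simp: indicator_def)
  qed (auto intro: borel_measurable_count_space_comp[OF Ds] sets_Collect_count_space_comp[OF Ds])
  then show ?thesis by (simp add: pFDR1_eq_fdp FWE1_def)
qed

lemma measurable_complement_count_space:
  "Ds \<in> P \<rightarrow>\<^sub>M count_space (Pow I) \<Longrightarrow> (\<lambda>\<omega>. I - Ds \<omega>) \<in> P \<rightarrow>\<^sub>M count_space (Pow I)"
  by (rule measurable_compose[where g = "\<lambda>S. I - S"]) auto

lemma
  assumes Ds: "Ds \<in> P \<rightarrow>\<^sub>M count_space (Pow {1..K})" and A: "A \<subseteq> {1..K}"
  shows FWE1_complement: "FWE1 P ({1..K} - A) (\<lambda>\<omega>. {1..K} - Ds \<omega>) = FWE2 P A Ds"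
    and FWE2_complement: "FWE2 P ({1..K} - A) (\<lambda>\<omega>. {1..K} - Ds \<omega>) = FWE1 P A Ds"
    and pFDR2_eq_pFDR1_complement: "pFDR2 K P A Ds = pFDR1 P ({1..K} - A) (\<lambda>\<omega>. {1..K} - Ds \<omega>)"
proof -
  have Ds_sub: "Ds \<omega> \<subseteq> {1..K}" if "\<omega> \<in> space P" for \<omega>
    using measurable_space[OF Ds that] by simp
  have Diff_complements: "({1..K} - Ds \<omega>) - ({1..K} - A) = A - Ds \<omega>" for \<omega>
    using A by auto
  have card_compl: "real K - real (card (Ds \<omega>)) = real (card ({1..K} - Ds \<omega>))"
    if "\<omega> \<in> space P" for \<omega>
  proof -
    have "card (Ds \<omega>) \<le> K" using card_mono[OF finite_atLeastAtMost Ds_sub[OF that]] by simp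
    with Ds_sub[OF that] show ?thesis by (simp add: card_Diff_subset finite_subset)
  qed
  show "FWE1 P ({1..K} - A) (\<lambda>\<omega>. {1..K} - Ds \<omega>) = FWE2 P A Ds"
    "FWE2 P ({1..K} - A) (\<lambda>\<omega>. {1..K} - Ds \<omega>) = FWE1 P A Ds"
    unfolding FWE1_def FWE2_def using A Ds_sub by (auto intro!: arg_cong[where f = "measure P"])
  show "pFDR2 K P A Ds = pFDR1 P ({1..K} - A) (\<lambda>\<omega>. {1..K} - Ds \<omega>)"
    unfolding pFDR2_def pFDR1_def
    by (intro arg_cong2[where f = "(/)"] Bochner_Integration.integral_cong
        arg_cong[where f = "measure P"] Collect_cong refl conj_cong)
      (simp_all only: Diff_complements card_compl one_of_nat_le_iff)
qed

lemma pFDR2_le_twice_FWE2: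
  assumes P: "prob_space P" and Ds: "Ds \<in> P \<rightarrow>\<^sub>M count_space (Pow {1..K})"
    and A: "A \<subseteq> {1..K}" "A \<noteq> {1..K}" and FWE1: "FWE1 P A Ds \<le> 1/2"
  shows "pFDR2 K P A Ds \<le> 2 * FWE2 P A Ds"
proof -
  let ?A' = "{1..K} - A" and ?Ds' = "\<lambda>\<omega>. {1..K} - Ds \<omega>"
  have "pFDR2 K P A Ds = pFDR1 P ?A' ?Ds'"
    by (rule pFDR2_eq_pFDR1_complement[OF Ds A(1)])
  also have "\<dots> \<le> 2 * FWE1 P ?A' ?Ds'"
  proof (rule pFDR1_le_twice_FWE1[OF P measurable_complement_count_space[OF Ds] finite_atLeastAtMost])
    show "?A' \<noteq> {}" using A by blast
    show "FWE2 P ?A' ?Ds' \<le> 1/2" using FWE1 by (simp only: FWE2_complement[OF Ds A(1)])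
  qed
  also have "FWE1 P ?A' ?Ds' = FWE2 P A Ds"
    by (rule FWE1_complement[OF Ds A(1)])
  finally show ?thesis .
qed

lemma FWE2_div_le_pFDR2:
  assumes P: "prob_space P" and Ds: "Ds \<in> P \<rightarrow>\<^sub>M count_space (Pow {1..K})"
    and "0 < K" and A: "A \<subseteq> {1..K}"
  shows "FWE2 P A Ds / real K \<le> pFDR2 K P A Ds"
proof -
  let ?A' = "{1..K} - A" and ?Ds' = "\<lambda>\<omega>. {1..K} - Ds \<omega>"
  have "FWE2 P A Ds / real K = FWE1 P ?A' ?Ds' / real (card {1..K})"
    by (simp only: FWE1_complement[OF Ds A] card_atLeastAtMost diff_Suc_1)
  also have "\<dots> \<le> pFDR1 P ?A' ?Ds'"
    using \<open>0 < K\<close> by (intro FWE1_div_card_le_pFDR1[OF P measurable_complement_count_space[OF Ds]]) auto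
  also have "\<dots> = pFDR2 K P A Ds"
    by (rule pFDR2_eq_pFDR1_complement[OF Ds A, symmetric])
  finally show ?thesis .
qed

theorem proposition8p1:
  fixes M :: "'a measure"
    and P0 P1 :: "nat \<Rightarrow> (nat \<Rightarrow> 'a) measure"
    and K l u :: nat and a b c d :: real
    and Dc :: "nat \<Rightarrow> 'a outcome \<Rightarrow> bool"
  assumes K: "K \<ge> 2"
    and model: "stream_model M K P0 P1"
    and lu: "0 < l" "l \<le> u" "u < K"
    and thr: "a > 0" "b > 0" "c > 0" "d > 0"
    and proc: "Dc = hat_D M P0 P1 K l u a b c d \<or> Dc = sprt_D M P0 P1 a b
               \<or> Dc = check_D M P0 P1 K l u a b c d"
    and fwe: "\<forall>A\<in>Pi_lu K l u. FWE1 (PA K P0 P1 A) A (Dset K Dc) \<le> 1/2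
                            \<and> FWE2 (PA K P0 P1 A) A (Dset K Dc) \<le> 1/2"
  shows "(\<forall>A\<in>Pi_lu K l u.
           pFDR1 (PA K P0 P1 A) A (Dset K Dc) \<le> 2 * FWE1 (PA K P0 P1 A) A (Dset K Dc)
         \<and> pFDR2 K (PA K P0 P1 A) A (Dset K Dc) \<le> 2 * FWE2 (PA K P0 P1 A) A (Dset K Dc))
         \<and> (\<forall>T D. is_procedure M K T D \<longrightarrow> (\<forall>A\<in>Pi_lu K l u.
           pFDR1 (PA K P0 P1 A) A (Dset K D) \<ge> FWE1 (PA K P0 P1 A) A (Dset K D) / real K
         \<and> pFDR2 K (PA K P0 P1 A) A (Dset K D) \<ge> FWE2 (PA K P0 P1 A) A (Dset K D) / real K))"
proof (intro conjI ballI allI impI)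
  fix A assume A: "A \<in> Pi_lu K l u"
  then have A_sub: "A \<subseteq> {1..K}" and "A \<noteq> {}" and "A \<noteq> {1..K}"
    using lu by (auto simp: Pi_lu_def)
  have P: "prob_space (PA K P0 P1 A)" by (rule prob_space_PA[OF model])
  have Dc: "Dset K Dc \<in> PA K P0 P1 A \<rightarrow>\<^sub>M count_space (Pow {1..K})"
    using proc by (intro measurable_Dset_PA[OF model]) (auto intro: pred_hat_D pred_sprt_D pred_check_D)
  show "pFDR1 (PA K P0 P1 A) A (Dset K Dc) \<le> 2 * FWE1 (PA K P0 P1 A) A (Dset K Dc)"
    by (rule pFDR1_le_twice_FWE1[OF P Dc finite_atLeastAtMost \<open>A \<noteq> {}\<close>]) (use fwe A in blast)
  show "pFDR2 K (PA K P0 P1 A) A (Dset K Dc) \<le> 2 * FWE2 (PA K P0 P1 A) A (Dset K Dc)"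
    by (rule pFDR2_le_twice_FWE2[OF P Dc A_sub \<open>A \<noteq> {1..K}\<close>]) (use fwe A in blast)
next
  fix T D A assume proc_D: "is_procedure M K T D" and "A \<in> Pi_lu K l u"
  then have "A \<subseteq> {1..K}" by (simp add: Pi_lu_def)
  have D: "Dset K D \<in> PA K P0 P1 A \<rightarrow>\<^sub>M count_space (Pow {1..K})"
    by (rule measurable_Dset_PA[OF model pred_decision_of_procedure[OF proc_D]])
  have P: "prob_space (PA K P0 P1 A)" by (rule prob_space_PA[OF model])
  have "{1..K} \<noteq> {}" "0 < K" using K by auto
  show "FWE1 (PA K P0 P1 A) A (Dset K D) / real K \<le> pFDR1 (PA K P0 P1 A) A (Dset K D)"
    using FWE1_div_card_le_pFDR1[OF P D finite_atLeastAtMost \<open>{1..K} \<noteq> {}\<close>] by simp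
  show "FWE2 (PA K P0 P1 A) A (Dset K D) / real K \<le> pFDR2 K (PA K P0 P1 A) A (Dset K D)"
    by (rule FWE2_div_le_pFDR2[OF P D \<open>0 < K\<close> \<open>A \<subseteq> {1..K}\<close>])
qed

end
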